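(* Let $\gamma=\{t+iy(t):t\in[a,b]\}$, $-\infty<a<b<\infty$, be the graph of a Lipschitz function $y:[a,b]\to\mathbb{R}$. Suppose $\varphi$ is measurable on $\gamma$ and $\int_\gamma e^{-\varphi}\,ds<\infty$. Then polynomials are dense in $L^2(\gamma,\varphi)$: for every $f\in L^2(\gamma,\varphi)$ and $\varepsilon>0$ there is a holomorphic polynomial $P$ with $\int_\gamma|f-P|^2e^{-\varphi}ds<\varepsilon$.
   Context: $ds$ is arc length on $\gamma$. $L^2(\gamma,\varphi)$ is the space of measurable functions $f$ on $\gamma$ with $\int_\gamma|f|^2e^{-\varphi}ds<\infty$. *)

theory Defs
  imports "HOL-Analysis.Analysis" "HOL-Computational_Algebra.Polynomial"
begin

definition graph_param :: "(real \<Rightarrow> real) \<Rightarrow> real \<Rightarrow> complex" where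
  "graph_param y t = Complex t (y t)"

definition polygonal_length :: "(real \<Rightarrow> complex) \<Rightarrow> (nat \<Rightarrow> real) \<Rightarrow> nat \<Rightarrow> real" where
  "polygonal_length g p n = (\<Sum>i<n. cmod (g (p (Suc i)) - g (p i)))"

definition arc_length :: "(real \<Rightarrow> complex) \<Rightarrow> real \<Rightarrow> real \<Rightarrow> real" where
  "arc_length g u v =
     (SUP pn \<in> {(p, n). p 0 = u \<and> p n = v \<and> (\<forall>i<n. p i \<le> p (Suc i))}.
        polygonal_length g (fst pn) (snd pn))"

definition arc_length_fun :: "(real \<Rightarrow> real) \<Rightarrow> real \<Rightarrow> real \<Rightarrow> real \<Rightarrow> real" where
  "arc_length_fun y a b t = arc_length (graph_param y) a (min b (max a t))"

text \<open>Arc-length measure ds on gamma, as a measure on the complex plane: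
  the Lebesgue-Stieltjes measure ds of the arc-length function on [a,b],
  pushed forward to gamma by the parametrisation.\<close>
definition arc_measure :: "(real \<Rightarrow> real) \<Rightarrow> real \<Rightarrow> real \<Rightarrow> complex measure" where
  "arc_measure y a b =
     distr (restrict_space (interval_measure (arc_length_fun y a b)) {a..b}) borel (graph_param y)"

end

theory Submission
  imports Defs
begin

text \<open>
  Transported to the parameter interval, \<open>e\<^sup>-\<^sup>\<phi> ds\<close> becomes a finite measure \<open>\<mu>\<close> on \<open>[a,b]\<close>,
  and the claim is that the functions \<open>P \<circ> \<gamma>\<close> are dense in \<open>L\<^sup>2(\<mu>)\<close>. Simple functions are
  dense and the Borel sets are generated by the half-lines \<open>{c<..}\<close>, so by a Dynkin-system
  argument and bounded convergence it suffices to approximate \<open>sgn (t - c)\<close>.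
  For \<open>w = i (z - \<gamma> c)\<close> the function \<open>Ln (w + h) - Ln (-w + h)\<close> tends to \<open>i \<pi> sgn (t - c)\<close>
  on \<open>\<gamma>\<close> as \<open>h \<rightarrow> 0\<close> and stays bounded, because on a Lipschitz graph the point \<open>-h\<close> keeps
  distance at least \<open>h / (1 + L)\<close> from \<open>\<plusminus>w(\<gamma>)\<close>. Finally \<open>Ln (w + h)\<close> is a uniform limit of
  polynomials on \<open>\<gamma>\<close>: for large \<open>h\<close> this is the Taylor series of \<open>Ln (1 + w / h)\<close>, and the
  same distance bound lets the point \<open>-h\<close> be moved towards \<open>0\<close> in geometric steps, each time
  expanding \<open>1 / (w + s)\<close> and \<open>Ln (w + s)\<close> around the previous value of \<open>s\<close>.
\<close>

section \<open>Uniform approximation by polynomials\<close>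

definition poly_approximable_on :: "complex set \<Rightarrow> (complex \<Rightarrow> complex) \<Rightarrow> bool" where
  "poly_approximable_on K g \<longleftrightarrow> (\<forall>e>0. \<exists>P. \<forall>z\<in>K. cmod (g z - poly P z) \<le> e)"

lemma poly_approximable_on_cong:
  assumes "poly_approximable_on K f" "\<And>z. z \<in> K \<Longrightarrow> f z = g z"
  shows "poly_approximable_on K g"
  using assms unfolding poly_approximable_on_def by auto

lemma poly_approximable_on_poly: "poly_approximable_on K (poly P)"
  unfolding poly_approximable_on_def by (auto intro: exI[of _ P])

lemma poly_approximable_on_const: "poly_approximable_on K (\<lambda>z. c)"
  by (rule poly_approximable_on_cong[OF poly_approximable_on_poly[of K "[:c:]"]]) simp

lemma poly_approximable_on_ident: "poly_approximable_on K (\<lambda>z. z)"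
  by (rule poly_approximable_on_cong[OF poly_approximable_on_poly[of K "[:0, 1:]"]]) simp

lemma poly_approximable_on_uniform_limit:
  assumes "\<And>e. e > 0 \<Longrightarrow> \<exists>g. poly_approximable_on K g \<and> (\<forall>z\<in>K. cmod (f z - g z) \<le> e)"
  shows "poly_approximable_on K f"
  unfolding poly_approximable_on_def
proof (intro allI impI)
  fix e :: real assume "e > 0"
  then obtain g where g: "poly_approximable_on K g" "\<forall>z\<in>K. cmod (f z - g z) \<le> e/2"
    using assms[of "e/2"] by auto
  obtain P where P: "\<forall>z\<in>K. cmod (g z - poly P z) \<le> e/2"
    using g(1) \<open>e > 0\<close> unfolding poly_approximable_on_def by (meson half_gt_zero)
  have "cmod (f z - poly P z) \<le> e" if "z \<in> K" for z
    using norm_diff_triangle_ineq[of "f z" "g z" "g z" "poly P z"] g(2) P that by fastforce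
  then show "\<exists>P. \<forall>z\<in>K. cmod (f z - poly P z) \<le> e" by blast
qed

lemma poly_approximable_on_add:
  assumes "poly_approximable_on K f" "poly_approximable_on K g"
  shows "poly_approximable_on K (\<lambda>z. f z + g z)"
  unfolding poly_approximable_on_def
proof (intro allI impI)
  fix e :: real assume "e > 0"
  then obtain P Q where P: "\<forall>z\<in>K. cmod (f z - poly P z) \<le> e/2"
    and Q: "\<forall>z\<in>K. cmod (g z - poly Q z) \<le> e/2"
    using assms unfolding poly_approximable_on_def by (meson half_gt_zero)
  have "cmod (f z + g z - poly (P + Q) z) \<le> e" if "z \<in> K" for z
    using norm_triangle_ineq[of "f z - poly P z" "g z - poly Q z"] P Q that
    by (fastforce simp: algebra_simps)
  then show "\<exists>R. \<forall>z\<in>K. cmod (f z + g z - poly R z) \<le> e" by blast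
qed

lemma poly_approximable_on_cmult:
  assumes "poly_approximable_on K f"
  shows "poly_approximable_on K (\<lambda>z. c * f z)"
  unfolding poly_approximable_on_def
proof (intro allI impI)
  fix e :: real assume "e > 0"
  then obtain P where P: "\<forall>z\<in>K. cmod (f z - poly P z) \<le> e / (cmod c + 1)"
    using assms unfolding poly_approximable_on_def
    by (metis divide_pos_pos norm_ge_zero add_nonneg_pos zero_less_one)
  have "cmod (c * f z - poly (smult c P) z) \<le> e" if "z \<in> K" for z
  proof -
    have "cmod (c * f z - poly (smult c P) z) = cmod c * cmod (f z - poly P z)"
      by (simp add: right_diff_distrib flip: norm_mult)
    also have "\<dots> \<le> (cmod c + 1) * (e / (cmod c + 1))"
      using P that by (intro mult_mono) auto
    also have "\<dots> = e" by (simp add: add_nonneg_eq_0_iff)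
    finally show ?thesis .
  qed
  then show "\<exists>R. \<forall>z\<in>K. cmod (c * f z - poly R z) \<le> e" by blast
qed

lemma poly_approximable_on_sum:
  assumes "\<And>k. k \<in> A \<Longrightarrow> poly_approximable_on K (f k)"
  shows "poly_approximable_on K (\<lambda>z. \<Sum>k\<in>A. f k z)"
  using assms
  by (induction A rule: infinite_finite_induct)
    (simp_all add: poly_approximable_on_const poly_approximable_on_add)

lemma poly_approximable_on_imp_bounded:
  assumes "poly_approximable_on K f" "bounded K"
  obtains B where "\<And>z. z \<in> K \<Longrightarrow> cmod (f z) \<le> B"
proof -
  obtain P where P: "\<forall>z\<in>K. cmod (f z - poly P z) \<le> 1"
    using assms(1) unfolding poly_approximable_on_def by force
  have "bounded (poly P ` closure K)"
    using assms(2) by (intro compact_imp_bounded compact_continuous_image continuous_intros) simp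
  then obtain C where C: "\<forall>w\<in>poly P ` closure K. norm w \<le> C" by (meson bounded_iff)
  have "cmod (f z) \<le> 1 + C" if "z \<in> K" for z
    using norm_triangle_sub[of "f z" "poly P z"] P C closure_subset that by fastforce
  then show thesis by (rule that)
qed

lemma poly_approximable_on_mult:
  assumes f: "poly_approximable_on K f" and g: "poly_approximable_on K g" and K: "bounded K"
  shows "poly_approximable_on K (\<lambda>z. f z * g z)"
  unfolding poly_approximable_on_def
proof (intro allI impI)
  fix e :: real assume "e > 0"
  obtain Bf where Bf: "\<And>z. z \<in> K \<Longrightarrow> cmod (f z) \<le> Bf"
    using poly_approximable_on_imp_bounded[OF f K] by blast
  obtain Bg where Bg: "\<And>z. z \<in> K \<Longrightarrow> cmod (g z) \<le> Bg"
    using poly_approximable_on_imp_bounded[OF g K] by blast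
  define B where "B = max 1 (max Bf Bg) + 1"
  define d where "d = min 1 (e / (2 * B))"
  have B: "B \<ge> 1" unfolding B_def by simp
  have d: "d > 0" "d \<le> 1" "2 * B * d \<le> e"
    using \<open>e > 0\<close> B unfolding d_def by (auto simp: field_simps min_def)
  obtain P Q where P: "\<forall>z\<in>K. cmod (f z - poly P z) \<le> d" and Q: "\<forall>z\<in>K. cmod (g z - poly Q z) \<le> d"
    using f g d(1) unfolding poly_approximable_on_def by meson
  have "cmod (f z * g z - poly (P * Q) z) \<le> e" if z: "z \<in> K" for z
  proof -
    have fz: "cmod (f z) \<le> B" using Bf[OF z] unfolding B_def by linarith
    have "cmod (poly Q z) \<le> cmod (g z) + cmod (g z - poly Q z)"
      using norm_triangle_sub[of "poly Q z" "g z"] by (simp add: norm_minus_commute)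
    also have "\<dots> \<le> B" using Bg[OF z] Q d z unfolding B_def by fastforce
    finally have Qz: "cmod (poly Q z) \<le> B" .
    have "f z * g z - poly (P * Q) z = f z * (g z - poly Q z) + (f z - poly P z) * poly Q z"
      by (simp add: algebra_simps)
    then have "cmod (f z * g z - poly (P * Q) z)
        \<le> cmod (f z) * cmod (g z - poly Q z) + cmod (f z - poly P z) * cmod (poly Q z)"
      by (metis norm_mult norm_triangle_ineq)
    also have "\<dots> \<le> B * d + d * B"
      using fz Qz P Q z B d by (intro add_mono mult_mono) auto
    also have "\<dots> = 2 * B * d" by simp
    finally show ?thesis using d(3) by linarith
  qed
  then show "\<exists>R. \<forall>z\<in>K. cmod (f z * g z - poly R z) \<le> e" by blast
qed

lemma poly_approximable_on_power:
  assumes "poly_approximable_on K f" "bounded K"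
  shows "poly_approximable_on K (\<lambda>z. f z ^ n)"
  by (induction n) (auto intro!: poly_approximable_on_mult poly_approximable_on_const assms)

lemma power_series_tail_bound:
  fixes c :: "nat \<Rightarrow> complex"
  assumes sums: "(\<lambda>k. c k * w ^ k) sums F" and c: "\<And>k. cmod (c k) \<le> 1" and w: "cmod w \<le> 1/2"
  shows "cmod (F - (\<Sum>k<N. c k * w ^ k)) \<le> 2 * (1/2) ^ N"
proof -
  have tail: "(\<lambda>k. c (k + N) * w ^ (k + N)) sums (F - (\<Sum>k<N. c k * w ^ k))"
    using sums by (subst sums_iff_shift) simp
  have "(\<lambda>k. (1/2::real) ^ N * (1/2) ^ k) sums ((1/2) ^ N * (1 / (1 - 1/2)))"
    by (intro sums_mult geometric_sums) simp
  then have majorant: "(\<lambda>k. (1/2::real) ^ (k + N)) sums (2 * (1/2) ^ N)"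
    by (simp add: power_add mult.commute)
  have "cmod (c (k + N) * w ^ (k + N)) \<le> (1/2) ^ (k + N)" for k
    using mult_mono[OF c power_mono[OF w]] by (simp add: norm_mult norm_power)
  then have "cmod (\<Sum>k. c (k + N) * w ^ (k + N)) \<le> (\<Sum>k. (1/2) ^ (k + N))"
    using majorant by (intro norm_suminf_le) (auto simp: sums_iff)
  then show ?thesis using tail majorant by (simp add: sums_iff)
qed

lemma poly_approximable_on_power_series:
  fixes c :: "nat \<Rightarrow> complex"
  assumes x: "poly_approximable_on K x" "bounded K" and x_small: "\<And>z. z \<in> K \<Longrightarrow> cmod (x z) \<le> 1/2"
    and sums: "\<And>w. cmod w \<le> 1/2 \<Longrightarrow> (\<lambda>k. c k * w ^ k) sums F w" and c: "\<And>k. cmod (c k) \<le> 1"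
  shows "poly_approximable_on K (\<lambda>z. F (x z))"
proof (rule poly_approximable_on_uniform_limit)
  fix e :: real assume "e > 0"
  then obtain N where N: "(1/2::real) ^ N < e/2" using real_arch_pow_inv[of "e/2" "1/2"] by auto
  have "poly_approximable_on K (\<lambda>z. \<Sum>k<N. c k * x z ^ k)"
    by (intro poly_approximable_on_sum poly_approximable_on_cmult poly_approximable_on_power x)
  moreover have "cmod (F (x z) - (\<Sum>k<N. c k * x z ^ k)) \<le> e" if "z \<in> K" for z
    using power_series_tail_bound[OF sums[OF x_small[OF that]] c x_small[OF that], of N] N
    by linarith
  ultimately show "\<exists>g. poly_approximable_on K g \<and> (\<forall>z\<in>K. cmod (F (x z) - g z) \<le> e)" by blast
qed

lemma poly_approximable_on_geometric:
  assumes "poly_approximable_on K x" "bounded K" "\<And>z. z \<in> K \<Longrightarrow> cmod (x z) \<le> 1/2"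
  shows "poly_approximable_on K (\<lambda>z. 1 / (1 - x z))"
proof (rule poly_approximable_on_power_series[OF assms, of "\<lambda>_. 1"])
  fix w :: complex assume "cmod w \<le> 1/2"
  then show "(\<lambda>k. 1 * w ^ k) sums (1 / (1 - w))" using geometric_sums[of w] by simp
qed auto

lemma poly_approximable_on_Ln_1_plus:
  assumes "poly_approximable_on K x" "bounded K" "\<And>z. z \<in> K \<Longrightarrow> cmod (x z) \<le> 1/2"
  shows "poly_approximable_on K (\<lambda>z. Ln (1 + x z))"
proof (rule poly_approximable_on_power_series[OF assms, of "\<lambda>k. - ((-1) ^ k) / of_nat k"])
  fix w :: complex assume "cmod w \<le> 1/2"
  then have "(\<lambda>k. - ((-w) ^ k) / of_nat k) sums Ln (1 + w)" by (intro Ln_series') auto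
  then show "(\<lambda>k. - ((-1) ^ k) / of_nat k * w ^ k) sums Ln (1 + w)"
    by (simp add: power_minus[of w])
next
  fix k :: nat
  show "cmod (- ((-1) ^ k) / of_nat k) \<le> 1"
    by (cases "k = 0") (auto simp: norm_divide norm_power)
qed

section \<open>Logarithms with a movable branch point\<close>

text \<open>No multiple of \<open>2 \<pi> i\<close> appears: \<open>u\<close> and \<open>v\<close> lie in the same open half plane or on the
  positive real axis.\<close>

lemma Ln_eq_Ln_add_Ln_divide:
  fixes u v :: complex
  assumes u: "u \<noteq> 0" and v: "v \<noteq> 0" and same_Im: "Im u = Im v"
    and real: "Im u = 0 \<Longrightarrow> Re u > 0 \<and> Re v > 0"
  shows "Ln u = Ln v + Ln (u / v)"
proof -
  have "- pi < Im (Ln u - Ln v) \<and> Im (Ln u - Ln v) \<le> pi"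
  proof (cases "Im u" "0 :: real" rule: linorder_cases)
    case less
    then show ?thesis
      using same_Im Im_Ln_pos_le[OF u] Im_Ln_pos_le[OF v] mpi_less_Im_Ln[OF u] mpi_less_Im_Ln[OF v]
        Im_Ln_le_pi[OF u] Im_Ln_le_pi[OF v]
      by auto
  next
    case equal
    then show ?thesis using real same_Im Im_Ln_eq_0[OF u] Im_Ln_eq_0[OF v] by simp
  next
    case greater
    then show ?thesis using Im_Ln_pos_lt_imp[of u] Im_Ln_pos_lt_imp[of v] same_Im by auto
  qed
  moreover have "u / v = exp (Ln u - Ln v)" using u v by (simp add: exp_diff)
  ultimately show ?thesis by simp
qed

locale cone_avoiding =
  fixes K :: "complex set" and w :: "complex \<Rightarrow> complex" and \<kappa> :: real
  assumes bounded: "bounded K" and approximable: "poly_approximable_on K w"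
    and kappa_pos: "\<kappa> > 0"
    and dist_neg_axis: "\<And>z s. z \<in> K \<Longrightarrow> s \<ge> 0 \<Longrightarrow> \<kappa> * s \<le> cmod (w z + of_real s)"
    and real_imp_zero: "\<And>z. z \<in> K \<Longrightarrow> Im (w z) = 0 \<Longrightarrow> w z = 0"
begin

lemma shift_nonzero: "z \<in> K \<Longrightarrow> s > 0 \<Longrightarrow> w z + of_real s \<noteq> 0"
  using dist_neg_axis[of z s] kappa_pos by (smt (verit) mult_pos_pos norm_zero)

lemma approximable_shift_large:
  assumes R: "R \<ge> 0" "\<And>z. z \<in> K \<Longrightarrow> cmod (w z) \<le> R" and s: "s \<ge> 2 * R + 1"
  shows "poly_approximable_on K (\<lambda>z. 1 / (w z + of_real s)) \<and>
         poly_approximable_on K (\<lambda>z. Ln (w z + of_real s))"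
proof -
  define x where "x z = - (1 / of_real s) * w z" for z
  have spos: "s > 0" using R(1) s by linarith
  have x: "poly_approximable_on K x" unfolding x_def by (intro poly_approximable_on_cmult approximable)
  have x_small: "cmod (x z) \<le> 1/2" if "z \<in> K" for z
    using R(2)[OF that] s spos by (simp add: x_def norm_divide norm_mult divide_le_eq)
  have mx: "poly_approximable_on K (\<lambda>z. - x z)"
    using poly_approximable_on_cmult[OF x, of "-1"] by simp
  have eq: "w z + of_real s = of_real s * (1 - x z)" for z
    using spos by (simp add: x_def field_simps)
  have "1 - x z \<noteq> 0" if "z \<in> K" for z using x_small[OF that] by auto
  then have Ln_eq: "Ln (w z + of_real s) = Ln (of_real s) + Ln (1 + - x z)" if "z \<in> K" for z
    using Ln_times_of_real[OF spos] that by (simp add: eq)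
  have "poly_approximable_on K (\<lambda>z. (1 / of_real s) * (1 / (1 - x z)))"
    by (intro poly_approximable_on_cmult poly_approximable_on_geometric x bounded x_small)
  then have "poly_approximable_on K (\<lambda>z. 1 / (w z + of_real s))"
    by (rule poly_approximable_on_cong) (simp add: eq)
  moreover have "poly_approximable_on K (\<lambda>z. Ln (of_real s) + Ln (1 + - x z))"
    by (intro poly_approximable_on_add poly_approximable_on_const poly_approximable_on_Ln_1_plus
        mx bounded) (metis norm_minus_cancel x_small)
  then have "poly_approximable_on K (\<lambda>z. Ln (w z + of_real s))"
    by (rule poly_approximable_on_cong) (simp add: Ln_eq)
  ultimately show ?thesis ..
qed

text \<open>The point \<open>-s'\<close> is moved to \<open>-s\<close> only so far that \<open>|(s' - s) / (w + s')| \<le> 1/2\<close>;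
  then \<open>1 / (w + s)\<close> and \<open>Ln (w + s)\<close> are power series in this quotient.\<close>

lemma approximable_shift_step:
  assumes s: "s > 0" "s \<le> s'" "2 * (s' - s) \<le> \<kappa> * s'"
    and inverse: "poly_approximable_on K (\<lambda>z. 1 / (w z + of_real s'))"
    and Ln: "poly_approximable_on K (\<lambda>z. Ln (w z + of_real s'))"
  shows "poly_approximable_on K (\<lambda>z. 1 / (w z + of_real s)) \<and>
         poly_approximable_on K (\<lambda>z. Ln (w z + of_real s))"
proof -
  define x where "x z = of_real (s' - s) * (1 / (w z + of_real s'))" for z
  have s'pos: "s' > 0" using s by linarith
  have x: "poly_approximable_on K x" unfolding x_def by (intro poly_approximable_on_cmult inverse)
  have x_small: "cmod (x z) \<le> 1/2" if z: "z \<in> K" for z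
  proof -
    have "cmod (x z) = (s' - s) / cmod (w z + of_real s')"
      using s by (simp add: x_def norm_divide norm_mult flip: of_real_diff)
    also have "\<dots> \<le> (s' - s) / (\<kappa> * s')"
    proof (rule divide_left_mono)
      have "0 < \<kappa> * s'" using kappa_pos s'pos by simp
      then show "0 < cmod (w z + of_real s') * (\<kappa> * s')"
        using shift_nonzero[OF z s'pos] by (simp add: zero_less_mult_iff)
    qed (use dist_neg_axis[OF z, of s'] s in auto)
    also have "\<dots> \<le> 1/2" using s kappa_pos s'pos by (simp add: divide_le_eq)
    finally show ?thesis .
  qed
  have mx: "poly_approximable_on K (\<lambda>z. - x z)"
    using poly_approximable_on_cmult[OF x, of "-1"] by simp
  have eq: "w z + of_real s = (w z + of_real s') * (1 - x z)" if "z \<in> K" for z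
    using shift_nonzero[OF that s'pos] by (simp add: x_def field_simps)
  have Ln_eq: "Ln (w z + of_real s) = Ln (w z + of_real s') + Ln (1 + - x z)" if z: "z \<in> K" for z
  proof -
    have "Ln (w z + of_real s) = Ln (w z + of_real s') + Ln ((w z + of_real s) / (w z + of_real s'))"
      using shift_nonzero[OF z s(1)] shift_nonzero[OF z s'pos] real_imp_zero[OF z] s'pos s
      by (intro Ln_eq_Ln_add_Ln_divide) auto
    also have "(w z + of_real s) / (w z + of_real s') = 1 + - x z"
      using eq[OF z] shift_nonzero[OF z s'pos] by (simp add: field_simps)
    finally show ?thesis .
  qed
  have "poly_approximable_on K (\<lambda>z. (1 / (w z + of_real s')) * (1 / (1 - x z)))"
    by (intro poly_approximable_on_mult inverse poly_approximable_on_geometric x x_small bounded)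
  then have "poly_approximable_on K (\<lambda>z. 1 / (w z + of_real s))"
    by (rule poly_approximable_on_cong) (simp add: eq)
  moreover have "poly_approximable_on K (\<lambda>z. Ln (w z + of_real s') + Ln (1 + - x z))"
    by (intro poly_approximable_on_add Ln poly_approximable_on_Ln_1_plus mx bounded)
      (metis norm_minus_cancel x_small)
  then have "poly_approximable_on K (\<lambda>z. Ln (w z + of_real s))"
    by (rule poly_approximable_on_cong) (simp add: Ln_eq)
  ultimately show ?thesis ..
qed

lemma approximable_shift:
  assumes "s > 0"
  shows "poly_approximable_on K (\<lambda>z. 1 / (w z + of_real s)) \<and>
         poly_approximable_on K (\<lambda>z. Ln (w z + of_real s))"
proof -
  obtain R where R: "\<And>z. z \<in> K \<Longrightarrow> cmod (w z) \<le> R"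
    using poly_approximable_on_imp_bounded[OF approximable bounded] by blast
  define S where "S = 2 * max R 0 + 1"
  define q where "q = 1 + \<kappa> / 2"
  have q: "q > 1" using kappa_pos by (simp add: q_def)
  have "poly_approximable_on K (\<lambda>z. 1 / (w z + of_real s)) \<and>
        poly_approximable_on K (\<lambda>z. Ln (w z + of_real s))"
    if "S \<le> s * q ^ n" "s > 0" for n s
    using that
  proof (induction n arbitrary: s)
    case 0
    then show ?case
      using R by (intro approximable_shift_large[of "max R 0"]) (auto simp: S_def le_max_iff_disj)
  next
    case (Suc n)
    have "S \<le> (s * q) * q ^ n" "s * q > 0" using Suc.prems q by (auto simp: mult.assoc)
    then have IH: "poly_approximable_on K (\<lambda>z. 1 / (w z + of_real (s * q)))"
      "poly_approximable_on K (\<lambda>z. Ln (w z + of_real (s * q)))"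
      using Suc.IH by blast+
    have "s \<le> s * q" "2 * (s * q - s) \<le> \<kappa> * (s * q)"
      using Suc.prems q kappa_pos by (simp_all add: q_def algebra_simps)
    from approximable_shift_step[OF Suc.prems(2) this IH] show ?case .
  qed
  moreover obtain n where "S / s < q ^ n" using real_arch_pow[OF q] by blast
  then have "S \<le> s * q ^ n" using \<open>s > 0\<close> by (simp add: divide_less_eq mult.commute)
  ultimately show ?thesis using \<open>s > 0\<close> by blast
qed

end

lemma norm_Ln_shift_diff_le:
  fixes \<zeta> :: complex
  assumes h: "h > 0" and \<kappa>: "\<kappa> > 0"
    and plus: "\<kappa> * h \<le> cmod (\<zeta> + of_real h)" and minus: "\<kappa> * h \<le> cmod (- \<zeta> + of_real h)"
  shows "cmod (Ln (\<zeta> + of_real h) - Ln (- \<zeta> + of_real h)) \<le> 2 / \<kappa> + 2 * pi"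
proof -
  define u where "u = \<zeta> + of_real h"
  define v where "v = - \<zeta> + of_real h"
  have \<kappa>h: "\<kappa> * h > 0" using h \<kappa> by simp
  have "u \<noteq> 0" "v \<noteq> 0" using plus minus \<kappa>h unfolding u_def v_def by auto
  have ln_diff: "ln A - ln B \<le> 2 / \<kappa>" if A: "A > 0" "A \<le> B + 2 * h" and B: "B \<ge> \<kappa> * h" for A B
  proof -
    have "B > 0" using B \<kappa>h by linarith
    then have "ln A - ln B \<le> A / B - 1" using A ln_le_minus_one[of "A / B"] by (simp add: ln_div)
    also have "\<dots> = (A - B) / B" using \<open>B > 0\<close> by (simp add: field_simps)
    also have "\<dots> \<le> 2 * h / B" using A \<open>B > 0\<close> by (intro divide_right_mono) auto
    also have "\<dots> \<le> 2 * h / (\<kappa> * h)" using B \<kappa>h h by (intro divide_left_mono) auto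
    finally show ?thesis using h by simp
  qed
  have "u = - v + 2 * of_real h" unfolding u_def v_def by simp
  then have "cmod u \<le> cmod (- v) + cmod (2 * of_real h :: complex)" by (metis norm_triangle_ineq)
  moreover have "v = - u + 2 * of_real h" unfolding u_def v_def by simp
  then have "cmod v \<le> cmod (- u) + cmod (2 * of_real h :: complex)" by (metis norm_triangle_ineq)
  ultimately have "cmod u \<le> cmod v + 2 * h" "cmod v \<le> cmod u + 2 * h"
    using h by (simp_all add: norm_mult)
  then have "\<bar>Re (Ln u - Ln v)\<bar> \<le> 2 / \<kappa>"
    using ln_diff[of "cmod u" "cmod v"] ln_diff[of "cmod v" "cmod u"] \<open>u \<noteq> 0\<close> \<open>v \<noteq> 0\<close> plus minus
    unfolding u_def v_def by (auto simp: abs_le_iff)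
  moreover have "\<bar>Im (Ln u - Ln v)\<bar> \<le> 2 * pi"
    using mpi_less_Im_Ln Im_Ln_le_pi \<open>u \<noteq> 0\<close> \<open>v \<noteq> 0\<close> by (smt (verit) minus_complex.sel(2))
  ultimately show ?thesis
    using cmod_le[of "Ln u - Ln v"] unfolding u_def v_def by linarith
qed

lemma Ln_shift_diff_tendsto:
  fixes \<zeta> :: complex
  assumes "Im \<zeta> = 0 \<Longrightarrow> \<zeta> = 0"
  shows "(\<lambda>n. Ln (\<zeta> + of_real (inverse (Suc n))) - Ln (- \<zeta> + of_real (inverse (Suc n))))
           \<longlonglongrightarrow> \<i> * pi * sgn (Im \<zeta>)"
proof (cases "Im \<zeta> = 0")
  case True
  then show ?thesis using assms by simp
next
  case False
  have "(\<lambda>n. complex_of_real (inverse (Suc n))) \<longlonglongrightarrow> 0"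
    using tendsto_of_real[OF LIMSEQ_inverse_real_of_nat, where 'a=complex] by simp
  moreover have "\<zeta> \<notin> \<real>\<^sub>\<le>\<^sub>0" "- \<zeta> \<notin> \<real>\<^sub>\<le>\<^sub>0" using False by (auto simp: complex_nonpos_Reals_iff)
  ultimately have "(\<lambda>n. Ln (\<zeta> + of_real (inverse (Suc n))) - Ln (- \<zeta> + of_real (inverse (Suc n))))
      \<longlonglongrightarrow> Ln (\<zeta> + 0) - Ln (- \<zeta> + 0)"
    by (intro tendsto_intros) auto
  moreover have "\<zeta> \<noteq> 0" using False by auto
  then have "Ln \<zeta> - Ln (- \<zeta>) = \<i> * pi * sgn (Im \<zeta>)"
    using Ln_minus[of \<zeta>] False by (cases "Im \<zeta> > 0") auto
  ultimately show ?thesis by simp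
qed

section \<open>Logarithmic jumps along a Lipschitz graph\<close>

lemma graph_param_diff: "graph_param y t - graph_param y c = Complex (t - c) (y t - y c)"
  by (simp add: graph_param_def complex_eq_iff)

lemma continuous_on_graph_param:
  assumes "continuous_on S y"
  shows "continuous_on S (graph_param y)"
proof -
  have "graph_param y = (\<lambda>t. of_real t + \<i> * of_real (y t))"
    by (auto simp: graph_param_def Complex_eq)
  then show ?thesis by (simp only:) (intro continuous_intros assms)
qed

locale lipschitz_graph =
  fixes y :: "real \<Rightarrow> real" and a b L :: real
  assumes lipschitz: "L-lipschitz_on {a..b} y"
begin

abbreviation "\<gamma> \<equiv> graph_param y"

lemma L_nonneg: "L \<ge> 0"
  using lipschitz by (rule lipschitz_on_nonneg)

lemma continuous_on_\<gamma>: "continuous_on {a..b} \<gamma>"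
  using lipschitz by (intro continuous_on_graph_param lipschitz_on_continuous_on)

lemma bounded_graph: "bounded (\<gamma> ` {a..b})"
  by (intro compact_imp_bounded compact_continuous_image continuous_on_\<gamma>) simp

definition turn :: "real \<Rightarrow> real \<Rightarrow> complex \<Rightarrow> complex" where
  "turn \<sigma> c z = \<i> * of_real \<sigma> * (z - \<gamma> c)"

lemma turn_neg: "turn (- \<sigma>) c z = - turn \<sigma> c z"
  by (simp add: turn_def)

lemma Re_Im_turn_shift:
  "Re (turn \<sigma> c (\<gamma> t) + of_real s) = s - \<sigma> * (y t - y c)"
  "Im (turn \<sigma> c (\<gamma> t) + of_real s) = \<sigma> * (t - c)"
  by (simp_all add: turn_def graph_param_diff)

lemma norm_turn_shift_ge:
  assumes t: "t \<in> {a..b}" and c: "c \<in> {a..b}" and s: "s \<ge> 0" and \<sigma>: "\<bar>\<sigma>\<bar> = 1"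
  shows "s / (1 + L) \<le> cmod (turn \<sigma> c (\<gamma> t) + of_real s)"
proof (cases "\<bar>t - c\<bar> \<ge> s / (1 + L)")
  case True
  have "\<bar>t - c\<bar> = \<bar>Im (turn \<sigma> c (\<gamma> t) + of_real s)\<bar>"
    by (simp only: Re_Im_turn_shift) (simp add: abs_mult \<sigma>)
  then show ?thesis using True abs_Im_le_cmod by (smt (verit))
next
  case False
  have "\<bar>\<sigma> * (y t - y c)\<bar> \<le> L * \<bar>t - c\<bar>"
    using lipschitz_onD[OF lipschitz t c] \<sigma> by (simp add: abs_mult dist_real_def)
  also have "\<dots> \<le> L * (s / (1 + L))" using False L_nonneg by (intro mult_left_mono) auto
  finally have Ly: "\<bar>\<sigma> * (y t - y c)\<bar> \<le> L * (s / (1 + L))" .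
  have "s / (1 + L) = s - L * (s / (1 + L))" using L_nonneg by (simp add: field_simps)
  also have "\<dots> \<le> \<bar>s - \<sigma> * (y t - y c)\<bar>" using Ly by linarith
  finally have "s / (1 + L) \<le> \<bar>s - \<sigma> * (y t - y c)\<bar>" .
  then have "s / (1 + L) \<le> \<bar>Re (turn \<sigma> c (\<gamma> t) + of_real s)\<bar>"
    by (simp only: Re_Im_turn_shift)
  then show ?thesis using abs_Re_le_cmod by (smt (verit))
qed

lemma cone_avoiding_turn:
  assumes c: "c \<in> {a..b}" and \<sigma>: "\<bar>\<sigma>\<bar> = 1"
  shows "cone_avoiding (\<gamma> ` {a..b}) (turn \<sigma> c) (1 / (1 + L))"
proof
  show "bounded (\<gamma> ` {a..b})" by (rule bounded_graph)
  have "poly_approximable_on (\<gamma> ` {a..b}) (\<lambda>z. (\<i> * of_real \<sigma>) * z + (- (\<i> * of_real \<sigma> * \<gamma> c)))"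
    by (intro poly_approximable_on_add poly_approximable_on_cmult poly_approximable_on_ident
        poly_approximable_on_const)
  then show "poly_approximable_on (\<gamma> ` {a..b}) (turn \<sigma> c)"
    by (rule poly_approximable_on_cong) (simp add: turn_def algebra_simps)
  show "0 < 1 / (1 + L)" using L_nonneg by simp
next
  fix z and s :: real assume "z \<in> \<gamma> ` {a..b}" "0 \<le> s"
  then show "1 / (1 + L) * s \<le> cmod (turn \<sigma> c z + of_real s)"
    using norm_turn_shift_ge c \<sigma> by auto
next
  fix z assume "z \<in> \<gamma> ` {a..b}" and "Im (turn \<sigma> c z) = 0"
  then obtain t where "z = \<gamma> t" "\<sigma> * (t - c) = 0" using Re_Im_turn_shift(2)[of \<sigma> c _ 0] by auto
  then have "z = \<gamma> c" using \<sigma> by auto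
  then show "turn \<sigma> c z = 0" by (simp add: turn_def)
qed

definition log_jump :: "real \<Rightarrow> real \<Rightarrow> complex \<Rightarrow> complex" where
  "log_jump c h z = Ln (turn 1 c z + of_real h) - Ln (turn (-1) c z + of_real h)"

lemma poly_approximable_on_log_jump:
  assumes c: "c \<in> {a..b}" and h: "h > 0"
  shows "poly_approximable_on (\<gamma> ` {a..b}) (log_jump c h)"
proof -
  interpret plus: cone_avoiding "\<gamma> ` {a..b}" "turn 1 c" "1 / (1 + L)"
    using cone_avoiding_turn[OF c] by simp
  interpret minus: cone_avoiding "\<gamma> ` {a..b}" "turn (-1) c" "1 / (1 + L)"
    using cone_avoiding_turn[OF c] by simp
  show ?thesis
    using poly_approximable_on_add[OF conjunct2[OF plus.approximable_shift[OF h]]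
        poly_approximable_on_cmult[OF conjunct2[OF minus.approximable_shift[OF h]], of "-1"]]
    by (simp add: log_jump_def[abs_def])
qed

lemma norm_log_jump_le:
  assumes c: "c \<in> {a..b}" and t: "t \<in> {a..b}" and h: "h > 0"
  shows "cmod (log_jump c h (\<gamma> t)) \<le> 2 * (1 + L) + 2 * pi"
proof -
  have "1 / (1 + L) > 0" using L_nonneg by simp
  then show ?thesis
    using norm_Ln_shift_diff_le[OF h, of "1 / (1 + L)" "turn 1 c (\<gamma> t)"]
      norm_turn_shift_ge[OF t c, of h 1] norm_turn_shift_ge[OF t c, of h "-1"] h
    by (simp add: log_jump_def turn_neg)
qed

lemma log_jump_tendsto:
  assumes "t \<in> {a..b}"
  shows "(\<lambda>n. log_jump c (inverse (Suc n)) (\<gamma> t)) \<longlonglongrightarrow> \<i> * pi * of_real (sgn (t - c))"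
proof -
  have "Im (turn 1 c (\<gamma> t)) = t - c" using Re_Im_turn_shift(2)[of 1 c t 0] by simp
  moreover have "turn 1 c (\<gamma> t) = 0" if "t = c" using that by (simp add: turn_def)
  ultimately show ?thesis
    using Ln_shift_diff_tendsto[of "turn 1 c (\<gamma> t)"] by (simp add: log_jump_def turn_neg)
qed

lemma continuous_on_log_jump:
  assumes h: "h > 0"
  shows "continuous_on {a..b} (\<lambda>t. log_jump c h (\<gamma> t))"
proof -
  have "continuous_on {a..b} (\<lambda>t. Ln (turn \<sigma> c (\<gamma> t) + of_real h))" if "\<bar>\<sigma>\<bar> = 1" for \<sigma>
  proof (rule continuous_on_Ln')
    show "continuous_on {a..b} (\<lambda>t. turn \<sigma> c (\<gamma> t) + of_real h)"
      unfolding turn_def by (intro continuous_intros continuous_on_\<gamma>)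
    show "turn \<sigma> c (\<gamma> t) + of_real h \<notin> \<real>\<^sub>\<le>\<^sub>0" for t
      using Re_Im_turn_shift[of \<sigma> c t h] that h by (auto simp: complex_nonpos_Reals_iff)
  qed
  then show ?thesis
    unfolding log_jump_def by (intro continuous_on_diff) auto
qed

end

section \<open>Approximation in \<open>L\<^sup>2\<close>\<close>

lemma borel_measurable_poly [measurable]: "poly (P :: complex poly) \<in> borel_measurable borel"
  by (intro borel_measurable_continuous_onI continuous_intros)

definition sq_L2_dist :: "'a measure \<Rightarrow> ('a \<Rightarrow> complex) \<Rightarrow> ('a \<Rightarrow> complex) \<Rightarrow> ennreal" where
  "sq_L2_dist \<mu> g h = (\<integral>\<^sup>+t. ennreal ((cmod (g t - h t))\<^sup>2) \<partial>\<mu>)"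

lemma ennreal_norm_add_sq_le:
  "ennreal ((cmod (u + v))\<^sup>2) \<le> 2 * ennreal ((cmod u)\<^sup>2) + 2 * ennreal ((cmod v)\<^sup>2)"
proof -
  have "(cmod (u + v))\<^sup>2 \<le> (cmod u + cmod v)\<^sup>2"
    by (intro power_mono norm_triangle_ineq) simp
  also have "\<dots> \<le> 2 * (cmod u)\<^sup>2 + 2 * (cmod v)\<^sup>2"
    using zero_le_power2[of "cmod u - cmod v"] by (simp add: power2_sum power2_diff)
  finally have "ennreal ((cmod (u + v))\<^sup>2) \<le> ennreal (2 * (cmod u)\<^sup>2 + 2 * (cmod v)\<^sup>2)"
    by (rule ennreal_leI)
  then show ?thesis by (simp add: ennreal_mult)
qed

lemma sq_L2_dist_triangle:
  assumes [measurable]: "f \<in> borel_measurable \<mu>" "g \<in> borel_measurable \<mu>" "h \<in> borel_measurable \<mu>"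
  shows "sq_L2_dist \<mu> f h \<le> 2 * sq_L2_dist \<mu> f g + 2 * sq_L2_dist \<mu> g h"
proof -
  have "sq_L2_dist \<mu> f h
      \<le> (\<integral>\<^sup>+t. 2 * ennreal ((cmod (f t - g t))\<^sup>2) + 2 * ennreal ((cmod (g t - h t))\<^sup>2) \<partial>\<mu>)"
    unfolding sq_L2_dist_def
  proof (intro nn_integral_mono)
    fix t
    show "ennreal ((cmod (f t - h t))\<^sup>2)
        \<le> 2 * ennreal ((cmod (f t - g t))\<^sup>2) + 2 * ennreal ((cmod (g t - h t))\<^sup>2)"
      using ennreal_norm_add_sq_le[of "f t - g t" "g t - h t"] by simp
  qed
  also have "\<dots> = 2 * sq_L2_dist \<mu> f g + 2 * sq_L2_dist \<mu> g h"
    unfolding sq_L2_dist_def by (simp add: nn_integral_add nn_integral_cmult)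
  finally show ?thesis .
qed

lemma ennreal_double_add_less:
  assumes "e > 0" "x < ennreal (e / 4)" "y < ennreal (e / 4)"
  shows "2 * x + 2 * y < ennreal e"
proof -
  have "2 * x + 2 * y < 2 * ennreal (e / 4) + 2 * ennreal (e / 4)"
    using assms by (intro add_strict_mono ennreal_mult_strict_left_mono) auto
  also have "\<dots> = ennreal e"
    using assms(1) by (simp add: mult_2 ennreal_plus[symmetric])
  finally show ?thesis .
qed

locale poly_L2 = finite_measure \<mu> for \<mu> :: "'a measure" +
  fixes \<gamma> :: "'a \<Rightarrow> complex"
  assumes measurable_\<gamma> [measurable]: "\<gamma> \<in> borel_measurable \<mu>"
begin

definition approximable :: "('a \<Rightarrow> complex) \<Rightarrow> bool" where
  "approximable g \<longleftrightarrow>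
     g \<in> borel_measurable \<mu> \<and> (\<forall>e>0. \<exists>P. sq_L2_dist \<mu> g (\<lambda>t. poly P (\<gamma> t)) < ennreal e)"

lemma measurable_poly_\<gamma> [measurable]: "(\<lambda>t. poly P (\<gamma> t)) \<in> borel_measurable \<mu>"
  by measurable

lemma approximable_imp_measurable: "approximable g \<Longrightarrow> g \<in> borel_measurable \<mu>"
  by (simp add: approximable_def)

lemma approximable_cong:
  assumes "approximable f" "\<And>t. t \<in> space \<mu> \<Longrightarrow> f t = g t"
  shows "approximable g"
proof -
  have "sq_L2_dist \<mu> g h = sq_L2_dist \<mu> f h" for h
    unfolding sq_L2_dist_def using assms(2) by (intro nn_integral_cong) simp
  moreover have "g \<in> borel_measurable \<mu>"
    using assms measurable_cong[of \<mu> f g] by (simp add: approximable_def)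
  ultimately show ?thesis using assms(1) by (simp add: approximable_def)
qed

lemma approximable_poly: "approximable (\<lambda>t. poly P (\<gamma> t))"
  unfolding approximable_def sq_L2_dist_def by (auto intro!: exI[of _ P])

lemma approximable_const: "approximable (\<lambda>t. c)"
  using approximable_poly[of "[:c:]"] by simp

lemma approximable_limit:
  assumes g [measurable]: "g \<in> borel_measurable \<mu>"
    and near: "\<And>e. e > 0 \<Longrightarrow> \<exists>h. approximable h \<and> sq_L2_dist \<mu> g h < ennreal e"
  shows "approximable g"
  unfolding approximable_def
proof (intro conjI allI impI g)
  fix e :: real assume "e > 0"
  then obtain h where h: "approximable h" "sq_L2_dist \<mu> g h < ennreal (e / 4)"
    using near[of "e / 4"] by auto
  have [measurable]: "h \<in> borel_measurable \<mu>" using h(1) by (rule approximable_imp_measurable)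
  obtain P where P: "sq_L2_dist \<mu> h (\<lambda>t. poly P (\<gamma> t)) < ennreal (e / 4)"
    using h(1) \<open>e > 0\<close> unfolding approximable_def by (meson divide_pos_pos zero_less_numeral)
  have "sq_L2_dist \<mu> g (\<lambda>t. poly P (\<gamma> t))
      \<le> 2 * sq_L2_dist \<mu> g h + 2 * sq_L2_dist \<mu> h (\<lambda>t. poly P (\<gamma> t))"
    by (rule sq_L2_dist_triangle) measurable
  also have "\<dots> < ennreal e" using ennreal_double_add_less[OF \<open>e > 0\<close> h(2) P] .
  finally show "\<exists>P. sq_L2_dist \<mu> g (\<lambda>t. poly P (\<gamma> t)) < ennreal e" by blast
qed

lemma approximable_add:
  assumes f: "approximable f" and g: "approximable g"
  shows "approximable (\<lambda>t. f t + g t)"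
proof (rule approximable_limit)
  have [measurable]: "f \<in> borel_measurable \<mu>" "g \<in> borel_measurable \<mu>"
    using f g by (simp_all add: approximable_imp_measurable)
  show "(\<lambda>t. f t + g t) \<in> borel_measurable \<mu>" by measurable
  fix e :: real assume "e > 0"
  then obtain P Q where P: "sq_L2_dist \<mu> f (\<lambda>t. poly P (\<gamma> t)) < ennreal (e / 4)"
    and Q: "sq_L2_dist \<mu> g (\<lambda>t. poly Q (\<gamma> t)) < ennreal (e / 4)"
    using f g unfolding approximable_def by (meson divide_pos_pos zero_less_numeral)
  let ?h = "\<lambda>t. poly P (\<gamma> t) + g t"
  have "sq_L2_dist \<mu> (\<lambda>t. f t + g t) (\<lambda>t. poly (P + Q) (\<gamma> t))
      \<le> 2 * sq_L2_dist \<mu> (\<lambda>t. f t + g t) ?h + 2 * sq_L2_dist \<mu> ?h (\<lambda>t. poly (P + Q) (\<gamma> t))"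
    by (rule sq_L2_dist_triangle) measurable
  also have "\<dots> = 2 * sq_L2_dist \<mu> f (\<lambda>t. poly P (\<gamma> t)) + 2 * sq_L2_dist \<mu> g (\<lambda>t. poly Q (\<gamma> t))"
    by (simp add: sq_L2_dist_def norm_minus_commute)
  also have "\<dots> < ennreal e" using ennreal_double_add_less[OF \<open>e > 0\<close> P Q] .
  finally show "\<exists>h. approximable h \<and> sq_L2_dist \<mu> (\<lambda>t. f t + g t) h < ennreal e"
    using approximable_poly by blast
qed

lemma approximable_cmult:
  assumes f: "approximable f"
  shows "approximable (\<lambda>t. c * f t)"
proof (rule approximable_limit)
  have [measurable]: "f \<in> borel_measurable \<mu>" using f by (rule approximable_imp_measurable)
  show "(\<lambda>t. c * f t) \<in> borel_measurable \<mu>" by measurable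
  fix e :: real assume "e > 0"
  define C where "C = (cmod c)\<^sup>2 + 1"
  have C: "C > 0" by (simp add: C_def add_nonneg_pos)
  obtain P where P: "sq_L2_dist \<mu> f (\<lambda>t. poly P (\<gamma> t)) < ennreal (e / C)"
    using f \<open>e > 0\<close> C unfolding approximable_def by (meson divide_pos_pos)
  have "sq_L2_dist \<mu> (\<lambda>t. c * f t) (\<lambda>t. poly (smult c P) (\<gamma> t))
      = ennreal ((cmod c)\<^sup>2) * sq_L2_dist \<mu> f (\<lambda>t. poly P (\<gamma> t))"
    unfolding sq_L2_dist_def
    by (simp add: norm_mult power_mult_distrib ennreal_mult right_diff_distrib[symmetric]
        nn_integral_cmult)
  also have "\<dots> \<le> ennreal ((cmod c)\<^sup>2) * ennreal (e / C)"
    using P by (intro mult_left_mono) auto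
  also have "\<dots> = ennreal ((cmod c)\<^sup>2 * (e / C))"
    using C \<open>e > 0\<close> by (simp flip: ennreal_mult)
  also have "\<dots> < ennreal e"
    using C \<open>e > 0\<close> by (intro ennreal_lessI) (auto simp: C_def field_simps)
  finally show "\<exists>h. approximable h \<and> sq_L2_dist \<mu> (\<lambda>t. c * f t) h < ennreal e"
    using approximable_poly by blast
qed

lemma approximable_sum:
  assumes "\<And>k. k \<in> A \<Longrightarrow> approximable (f k)"
  shows "approximable (\<lambda>t. \<Sum>k\<in>A. f k t)"
  using assms
  by (induction A rule: infinite_finite_induct) (simp_all add: approximable_const approximable_add)

lemma sq_L2_dist_tendsto_zero:
  assumes [measurable]: "\<And>n. G n \<in> borel_measurable \<mu>" "g \<in> borel_measurable \<mu>"
    "w \<in> borel_measurable \<mu>" and w: "(\<integral>\<^sup>+t. ennreal (w t) \<partial>\<mu>) < \<infinity>"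
    and lim: "\<And>t. t \<in> space \<mu> \<Longrightarrow> (\<lambda>n. G n t) \<longlonglongrightarrow> g t"
    and dominated: "\<And>n t. t \<in> space \<mu> \<Longrightarrow> (cmod (g t - G n t))\<^sup>2 \<le> w t"
  shows "(\<lambda>n. sq_L2_dist \<mu> g (G n)) \<longlonglongrightarrow> 0"
proof -
  have "(\<lambda>n. \<integral>\<^sup>+t. ennreal (norm (0 - (cmod (g t - G n t))\<^sup>2)) \<partial>\<mu>) \<longlonglongrightarrow> 0"
  proof (rule nn_integral_dominated_convergence_norm[where w = w])
    have "(\<lambda>n. (cmod (g t - G n t))\<^sup>2) \<longlonglongrightarrow> (cmod (g t - g t))\<^sup>2" if "t \<in> space \<mu>" for t
      using lim[OF that] by (intro tendsto_intros)
    then show "AE t in \<mu>. (\<lambda>n. (cmod (g t - G n t))\<^sup>2) \<longlonglongrightarrow> 0"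
      by (intro AE_I2) simp
  qed (use dominated w in \<open>auto\<close>)
  then show ?thesis by (simp add: sq_L2_dist_def)
qed

lemma approximable_bounded_limit:
  assumes G: "\<And>n. approximable (G n)"
    and lim: "\<And>t. t \<in> space \<mu> \<Longrightarrow> (\<lambda>n. G n t) \<longlonglongrightarrow> g t"
    and bounded: "\<And>n t. t \<in> space \<mu> \<Longrightarrow> cmod (G n t) \<le> B"
  shows "approximable g"
proof (rule approximable_limit)
  have [measurable]: "\<And>n. G n \<in> borel_measurable \<mu>" using G by (rule approximable_imp_measurable)
  show g [measurable]: "g \<in> borel_measurable \<mu>"
    by (rule borel_measurable_LIMSEQ_metric[of G, OF _ lim]) simp_all
  have "cmod (g t) \<le> B" if "t \<in> space \<mu>" for t
    using lim[OF that] bounded[OF that] by (intro LIMSEQ_le_const2[of "\<lambda>n. cmod (G n t)"] tendsto_intros) auto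
  then have "(cmod (g t - G n t))\<^sup>2 \<le> (2 * B)\<^sup>2" if "t \<in> space \<mu>" for n t
    using norm_triangle_ineq4[of "g t" "G n t"] bounded[OF that, of n] that
    by (intro power_mono) fastforce+
  moreover have "(\<integral>\<^sup>+t. ennreal ((2 * B)\<^sup>2) \<partial>\<mu>) < \<infinity>"
    by (simp add: ennreal_mult_eq_top_iff less_top[symmetric])
  ultimately have "(\<lambda>n. sq_L2_dist \<mu> g (G n)) \<longlonglongrightarrow> 0"
    using lim by (intro sq_L2_dist_tendsto_zero[where w = "\<lambda>_. (2 * B)\<^sup>2"]) auto
  fix e :: real assume "e > 0"
  then obtain n where "sq_L2_dist \<mu> g (G n) < ennreal e"
    using order_tendstoD(2)[OF \<open>(\<lambda>n. sq_L2_dist \<mu> g (G n)) \<longlonglongrightarrow> 0\<close>, of "ennreal e"]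
    by (auto dest: eventually_happens)
  then show "\<exists>h. approximable h \<and> sq_L2_dist \<mu> g h < ennreal e" using G by blast
qed

lemma approximable_uniform:
  assumes F: "poly_approximable_on (\<gamma> ` space \<mu>) F" and [measurable]: "(\<lambda>t. F (\<gamma> t)) \<in> borel_measurable \<mu>"
  shows "approximable (\<lambda>t. F (\<gamma> t))"
  unfolding approximable_def
proof (intro conjI allI impI)
  show "(\<lambda>t. F (\<gamma> t)) \<in> borel_measurable \<mu>" by measurable
  fix e :: real assume "e > 0"
  define m where "m = measure \<mu> (space \<mu>)"
  have m: "m \<ge> 0" by (simp add: m_def)
  define d where "d = min 1 (e / (m + 1))"
  have d: "d > 0" "d \<le> 1" "d * m < e"
    using \<open>e > 0\<close> m by (auto simp: d_def min_def field_simps)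
  obtain P where P: "\<forall>t\<in>space \<mu>. cmod (F (\<gamma> t) - poly P (\<gamma> t)) \<le> d"
    using F d(1) unfolding poly_approximable_on_def by blast
  have "sq_L2_dist \<mu> (\<lambda>t. F (\<gamma> t)) (\<lambda>t. poly P (\<gamma> t)) \<le> (\<integral>\<^sup>+t. ennreal (d\<^sup>2) \<partial>\<mu>)"
    unfolding sq_L2_dist_def using P d by (intro nn_integral_mono) (auto intro!: ennreal_leI power_mono)
  also have "\<dots> = ennreal (d\<^sup>2 * m)"
    by (simp add: emeasure_eq_measure m_def ennreal_mult)
  also have "\<dots> < ennreal e"
  proof (rule ennreal_lessI)
    have "d\<^sup>2 * m \<le> d * m"
      using d m by (intro mult_right_mono) (auto simp: power2_eq_square mult_le_cancel_left1)
    then show "d\<^sup>2 * m < e" using d(3) by linarith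
  qed fact
  finally show "\<exists>P. sq_L2_dist \<mu> (\<lambda>t. F (\<gamma> t)) (\<lambda>t. poly P (\<gamma> t)) < ennreal e" by blast
qed

lemma indicator_complex: "(indicator A t :: complex) = of_real (indicator A t)"
  by (simp add: indicator_def)

lemma approximable_indicator_sigma_sets:
  assumes "Int_stable G" and basic: "\<And>X. X \<in> G \<Longrightarrow> approximable (indicator X)"
    and "A \<in> sigma_sets UNIV G"
  shows "approximable (indicator A)"
proof -
  have "G \<subseteq> Pow UNIV" by simp
  from assms(1) this assms(3) show ?thesis
proof (induction rule: sigma_sets_induct_disjoint)
  case (compl X)
  then have "approximable (\<lambda>t. 1 + (-1) * indicator X t)"
    by (intro approximable_add approximable_const approximable_cmult)
  then show ?case by (rule approximable_cong) (simp add: indicator_def)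
next
  case (union X)
  have sums: "(\<lambda>i. indicator (X i) t :: real) sums indicator (\<Union>i. X i) t" for t
    using union.hyps(1) by (intro indicator_sums) (auto simp: disjoint_family_on_def)
  show ?case
  proof (rule approximable_bounded_limit[where G = "\<lambda>n t. \<Sum>i<n. indicator (X i) t" and B = 1])
    show "approximable (\<lambda>t. \<Sum>i<n. indicator (X i) t)" for n
      by (intro approximable_sum union.IH)
    show "(\<lambda>n. \<Sum>i<n. indicator (X i) t) \<longlonglongrightarrow> (indicator (\<Union>i. X i) t :: complex)" for t
      using tendsto_of_real[where 'a = complex, OF sums[of t, unfolded sums_def]]
      by (simp add: indicator_complex)
    have "(\<Sum>i<n. indicator (X i) t :: real) \<le> 1" for n t
    proof -
      have "(\<Sum>i<n. indicator (X i) t :: real) \<le> (\<Sum>i. indicator (X i) t)"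
        using sums[of t] by (intro sum_le_suminf) (auto simp: sums_iff)
      also have "\<dots> \<le> 1" using sums[of t] by (simp add: sums_iff indicator_def)
      finally show ?thesis .
    qed
    then show "cmod (\<Sum>i<n. indicator (X i) t :: complex) \<le> 1" for n t
      by (simp add: indicator_complex sum_nonneg flip: of_real_sum)
  qed
next
  case empty
  show ?case using approximable_const[of 0] by simp
qed (rule basic)
qed

lemma approximable_simple_function:
  assumes indicators: "\<And>A. A \<in> sets \<mu> \<Longrightarrow> approximable (indicator A)"
    and F: "simple_function \<mu> F"
  shows "approximable F"
proof -
  have "approximable (\<lambda>t. \<Sum>v\<in>F ` space \<mu>. v * indicator (F -` {v} \<inter> space \<mu>) t)"
    by (intro approximable_sum approximable_cmult indicators simple_functionD(2)[OF F])
  then show ?thesis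
  proof (rule approximable_cong)
    fix t assume "t \<in> space \<mu>"
    then have "F t = (\<Sum>v\<in>F ` space \<mu>. indicator (F -` {v} \<inter> space \<mu>) t *\<^sub>R v)"
      by (rule simple_function_indicator_representation_banach[OF F])
    also have "\<dots> = (\<Sum>v\<in>F ` space \<mu>. v * indicator (F -` {v} \<inter> space \<mu>) t)"
      by (intro sum.cong refl) (simp add: scaleR_conv_of_real indicator_complex)
    finally show "(\<Sum>v\<in>F ` space \<mu>. v * indicator (F -` {v} \<inter> space \<mu>) t) = F t" ..
  qed
qed

lemma approximable_L2:
  assumes indicators: "\<And>A. A \<in> sets \<mu> \<Longrightarrow> approximable (indicator A)"
    and g [measurable]: "g \<in> borel_measurable \<mu>"
    and L2: "(\<integral>\<^sup>+t. ennreal ((cmod (g t))\<^sup>2) \<partial>\<mu>) < \<infinity>"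
  shows "approximable g"
proof -
  obtain F where F: "\<And>i. simple_function \<mu> (F i)"
    and lim: "\<And>t. t \<in> space \<mu> \<Longrightarrow> (\<lambda>i. F i t) \<longlonglongrightarrow> g t"
    and bound: "\<And>i t. t \<in> space \<mu> \<Longrightarrow> dist (F i t) 0 \<le> 2 * dist (g t) 0"
    using borel_measurable_implies_sequence_metric[OF g, of 0] by blast
  have [measurable]: "\<And>i. F i \<in> borel_measurable \<mu>"
    using F by (rule borel_measurable_simple_function)
  have "(cmod (g t - F n t))\<^sup>2 \<le> 9 * (cmod (g t))\<^sup>2" if "t \<in> space \<mu>" for n t
  proof -
    have "cmod (g t - F n t) \<le> 3 * cmod (g t)"
      using norm_triangle_ineq4[of "g t" "F n t"] bound[OF that, of n] by simp
    then have "(cmod (g t - F n t))\<^sup>2 \<le> (3 * cmod (g t))\<^sup>2" by (intro power_mono) auto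
    then show ?thesis by (simp add: power_mult_distrib)
  qed
  moreover have "(\<integral>\<^sup>+t. ennreal (9 * (cmod (g t))\<^sup>2) \<partial>\<mu>) = 9 * (\<integral>\<^sup>+t. ennreal ((cmod (g t))\<^sup>2) \<partial>\<mu>)"
    by (simp add: ennreal_mult nn_integral_cmult)
  then have "(\<integral>\<^sup>+t. ennreal (9 * (cmod (g t))\<^sup>2) \<partial>\<mu>) < \<infinity>"
    using L2 by (simp add: ennreal_mult_less_top less_top)
  ultimately have "(\<lambda>n. sq_L2_dist \<mu> g (F n)) \<longlonglongrightarrow> 0"
    by (intro sq_L2_dist_tendsto_zero[where w = "\<lambda>t. 9 * (cmod (g t))\<^sup>2"] lim) measurable
  show ?thesis
  proof (rule approximable_limit[OF g])
    fix e :: real assume "e > 0"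
    then obtain n where "sq_L2_dist \<mu> g (F n) < ennreal e"
      using order_tendstoD(2)[OF \<open>(\<lambda>n. sq_L2_dist \<mu> g (F n)) \<longlonglongrightarrow> 0\<close>, of "ennreal e"]
      by (auto dest: eventually_happens)
    then show "\<exists>h. approximable h \<and> sq_L2_dist \<mu> g h < ennreal e"
      using approximable_simple_function[OF indicators F] by blast
  qed
qed

end

section \<open>Weighted arc length on the graph\<close>

locale weighted_graph = lipschitz_graph y a b L + finite_measure \<mu>
  for y :: "real \<Rightarrow> real" and a b L :: real and \<mu> :: "real measure" +
  assumes sets_eq: "sets \<mu> = sets (restrict_space borel {a..b})"
begin

lemma space_eq: "space \<mu> = {a..b}"
  using sets_eq_imp_space_eq[OF sets_eq] by (simp add: space_restrict_space)

lemma measurable_continuous: "continuous_on {a..b} f \<Longrightarrow> f \<in> borel_measurable \<mu>"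
  using borel_measurable_continuous_on_restrict measurable_cong_sets[OF sets_eq refl] by blast

sublocale poly_L2 \<mu> \<gamma>
  by unfold_locales (rule measurable_continuous[OF continuous_on_\<gamma>])

lemma approximable_sgn: "approximable (\<lambda>t. of_real (sgn (t - c)))"
proof (cases "c \<in> {a..b}")
  case True
  have "approximable (\<lambda>t. \<i> * pi * of_real (sgn (t - c)))"
  proof (rule approximable_bounded_limit)
    show "approximable (\<lambda>t. log_jump c (inverse (Suc n)) (\<gamma> t))" for n
      using poly_approximable_on_log_jump[OF True] continuous_on_log_jump
      by (intro approximable_uniform measurable_continuous) (simp_all add: space_eq)
    show "(\<lambda>n. log_jump c (inverse (Suc n)) (\<gamma> t)) \<longlonglongrightarrow> \<i> * pi * of_real (sgn (t - c))"
      if "t \<in> space \<mu>" for t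
      using log_jump_tendsto that by (simp add: space_eq)
    show "cmod (log_jump c (inverse (Suc n)) (\<gamma> t)) \<le> 2 * (1 + L) + 2 * pi"
      if "t \<in> space \<mu>" for n t
      using norm_log_jump_le[OF True] that by (simp add: space_eq)
  qed
  then have "approximable (\<lambda>t. 1 / (\<i> * pi) * (\<i> * pi * of_real (sgn (t - c))))"
    by (rule approximable_cmult)
  then show ?thesis by simp
next
  case False
  then have "(if c < a then 1 else -1) = (of_real (sgn (t - c)) :: complex)" if "t \<in> space \<mu>" for t
    using that by (auto simp: space_eq)
  then show ?thesis by (rule approximable_cong[OF approximable_const])
qed

lemma approximable_indicator_greaterThan: "approximable (indicator {c<..})"
proof (rule approximable_bounded_limit)
  let ?G = "\<lambda>n t. 1/2 + 1/2 * of_real (sgn (t - (c + inverse (Suc n)))) :: complex"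
  show "approximable (?G n)" for n
    by (intro approximable_add approximable_cmult approximable_const approximable_sgn)
  show "cmod (?G n t) \<le> 1" for n t
    by (auto simp: sgn_if)
  show "(\<lambda>n. ?G n t) \<longlonglongrightarrow> indicator {c<..} t" for t
  proof (cases "t > c")
    case True
    then have "\<forall>\<^sub>F n in sequentially. inverse (Suc n) < t - c"
      using order_tendstoD(2)[OF LIMSEQ_inverse_real_of_nat, of "t - c"] by simp
    then have "\<forall>\<^sub>F n in sequentially. ?G n t = indicator {c<..} t"
      by eventually_elim (use True in auto)
    then show ?thesis by (rule tendsto_eventually)
  next
    case False
    have "t - (c + inverse (Suc n)) < 0" for n
      using False by (smt (verit) inverse_positive_iff_positive of_nat_0_less_iff zero_less_Suc)
    then have "?G n t = indicator {c<..} t" for n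
      using False by simp
    then show ?thesis by simp
  qed
qed

lemma approximable_indicator:
  assumes "A \<in> sets \<mu>"
  shows "approximable (indicator A)"
proof (rule approximable_indicator_sigma_sets)
  show "Int_stable (range (greaterThan :: real \<Rightarrow> real set))"
    unfolding Int_stable_def
  proof safe
    fix x y :: real
    show "{x<..} \<inter> {y<..} \<in> range greaterThan" by (rule range_eqI[of _ _ "max x y"]) auto
  qed
  have "A \<in> sets borel" using assms by (simp add: sets_eq sets_restrict_space_iff)
  then show "A \<in> sigma_sets UNIV (range greaterThan)"
    by (simp add: borel_Ioi)
qed (auto intro: approximable_indicator_greaterThan)

end

definition pullback_measure :: "(real \<Rightarrow> real) \<Rightarrow> real \<Rightarrow> real \<Rightarrow> (complex \<Rightarrow> real) \<Rightarrow> real measure" where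
  "pullback_measure y a b \<phi> =
     density (restrict_space (interval_measure (arc_length_fun y a b)) {a..b})
       (\<lambda>t. ennreal (exp (- \<phi> (graph_param y t))))"

lemma sets_arc_param_measure:
  "sets (restrict_space (interval_measure (arc_length_fun y a b)) {a..b}) = sets (restrict_space borel {a..b})"
  by (rule sets_restrict_space_cong) simp

lemma sets_pullback_measure: "sets (pullback_measure y a b \<phi>) = sets (restrict_space borel {a..b})"
  unfolding pullback_measure_def by (simp add: sets_arc_param_measure)

lemma sets_arc_measure: "sets (arc_measure y a b) = sets borel"
  by (simp add: arc_measure_def)

lemma nn_integral_arc_measure:
  assumes "continuous_on {a..b} y"
    and [measurable]: "\<phi> \<in> borel_measurable borel" "u \<in> borel_measurable borel"
    and u: "\<And>z. u z \<ge> 0"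
  shows "(\<integral>\<^sup>+z. ennreal (u z * exp (- \<phi> z)) \<partial>arc_measure y a b)
       = (\<integral>\<^sup>+t. ennreal (u (graph_param y t)) \<partial>pullback_measure y a b \<phi>)"
proof -
  let ?M = "restrict_space (interval_measure (arc_length_fun y a b)) {a..b}"
  have [measurable]: "graph_param y \<in> borel_measurable ?M"
    using borel_measurable_continuous_on_restrict[OF continuous_on_graph_param[OF assms(1)]]
      measurable_cong_sets[OF sets_arc_param_measure refl] by blast
  have "(\<integral>\<^sup>+z. ennreal (u z * exp (- \<phi> z)) \<partial>arc_measure y a b)
      = (\<integral>\<^sup>+t. ennreal (u (graph_param y t) * exp (- \<phi> (graph_param y t))) \<partial>?M)"
    unfolding arc_measure_def by (rule nn_integral_distr) measurable
  also have "\<dots> = (\<integral>\<^sup>+t. ennreal (exp (- \<phi> (graph_param y t))) * ennreal (u (graph_param y t)) \<partial>?M)"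
    using u by (intro nn_integral_cong) (simp add: ennreal_mult mult.commute)
  also have "\<dots> = (\<integral>\<^sup>+t. ennreal (u (graph_param y t)) \<partial>pullback_measure y a b \<phi>)"
    unfolding pullback_measure_def by (rule nn_integral_density[symmetric]) measurable
  finally show ?thesis .
qed

lemma finite_measure_pullback_measure:
  assumes "continuous_on {a..b} y" "\<phi> \<in> borel_measurable borel"
    and "(\<integral>\<^sup>+z. ennreal (exp (- \<phi> z)) \<partial>arc_measure y a b) < \<infinity>"
  shows "finite_measure (pullback_measure y a b \<phi>)"
  using assms(3) nn_integral_arc_measure[OF assms(1,2), where u = "\<lambda>_. 1"]
  by (intro finite_measureI) simp

theorem theorem3p4:
  fixes y :: "real \<Rightarrow> real" and a b L :: real
    and \<phi> :: "complex \<Rightarrow> real" and f :: "complex \<Rightarrow> complex" and \<epsilon> :: real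
  assumes "a < b"
    and "L-lipschitz_on {a..b} y"
    and "\<phi> \<in> borel_measurable (arc_measure y a b)"
    and "(\<integral>\<^sup>+ z. ennreal (exp (- \<phi> z)) \<partial>arc_measure y a b) < \<infinity>"
    and "f \<in> borel_measurable (arc_measure y a b)"
    and "(\<integral>\<^sup>+ z. ennreal ((cmod (f z))\<^sup>2 * exp (- \<phi> z)) \<partial>arc_measure y a b) < \<infinity>"
    and "\<epsilon> > 0"
  shows "\<exists>P :: complex poly.
           (\<integral>\<^sup>+ z. ennreal ((cmod (f z - poly P z))\<^sup>2 * exp (- \<phi> z)) \<partial>arc_measure y a b)
             < ennreal \<epsilon>"
proof -
  interpret lipschitz_graph y a b L by unfold_locales (fact assms(2))
  have \<phi> [measurable]: "\<phi> \<in> borel_measurable borel" and f [measurable]: "f \<in> borel_measurable borel"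
    using assms(3,5) by (simp_all add: measurable_cong_sets[OF sets_arc_measure refl])
  let ?\<mu> = "pullback_measure y a b \<phi>"
  note transfer = nn_integral_arc_measure[OF lipschitz_on_continuous_on[OF lipschitz] \<phi>]
  interpret weighted_graph y a b L ?\<mu>
    using finite_measure_pullback_measure[OF lipschitz_on_continuous_on[OF lipschitz] \<phi> assms(4)]
    by (intro weighted_graph.intro weighted_graph_axioms.intro lipschitz_graph_axioms)
      (simp_all add: sets_pullback_measure)
  have "approximable (\<lambda>t. f (\<gamma> t))"
    using measurable_compose[OF measurable_\<gamma> f] assms(6) transfer[where u = "\<lambda>z. (cmod (f z))\<^sup>2"]
    by (intro approximable_L2[OF approximable_indicator]) simp_all
  then obtain P where P: "sq_L2_dist ?\<mu> (\<lambda>t. f (\<gamma> t)) (\<lambda>t. poly P (\<gamma> t)) < ennreal \<epsilon>"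
    using assms(7) unfolding approximable_def by blast
  have "(\<integral>\<^sup>+z. ennreal ((cmod (f z - poly P z))\<^sup>2 * exp (- \<phi> z)) \<partial>arc_measure y a b)
      = sq_L2_dist ?\<mu> (\<lambda>t. f (\<gamma> t)) (\<lambda>t. poly P (\<gamma> t))"
    unfolding sq_L2_dist_def by (rule transfer) simp_all
  then show ?thesis using P by (metis (no_types))
qed

end
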